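(* For every instance with nonnegative-value players (and any number of teams), there exists an allocation that is both EF1 and Pareto optimal.
   Context: Setting: teams $T=[n]$, players $P=\{p_1,\dots,p_m\}$. Each player $p$ has a complete, transitive weak preference $\succsim_p$ over $T$. Each team $i$ has an additive valuation $v_i:2^P\to\mathbb{R}$, $v_i(S)=\sum_{p\in S}v_i(p)$; nonnegative-value players means $v_i(p)\ge0$ for all $i,p$. An allocation is an ordered partition $(A_1,\dots,A_n)$ of $P$. $A$ is EF1 if for all distinct $i,j$ there are $X\subseteq A_i$, $Y\subseteq A_j$ with $|X\cup Y|\le1$ and $v_i(A_i\setminus X)\ge v_i(A_j\setminus Y)$. A team is better (worse) off in $A'$ than in $A$ if $v_i(A'_i)>v_i(A_i)$ (resp. $<$); a player is better (worse) off if she strictly prefers (strictly disprefers) her team in $A'$ to her team in $A$. $A$ is Pareto dominated by $A'$ if no party (team or player) is worse off and at least one party is better off; $A$ is Pareto optimal (PO) if not Pareto dominated by any allocation. *)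

theory Defs
  imports Complex_Main
begin

text \<open>Player p's weak preference over teams is the relation pref p (pref p s t means
  p weakly prefers s to t).\<close>

definition allocation :: "'t set \<Rightarrow> 'p set \<Rightarrow> ('t \<Rightarrow> 'p set) \<Rightarrow> bool" where
  "allocation T P A \<longleftrightarrow>
     (\<Union>i\<in>T. A i) = P \<and> (\<forall>i\<in>T. \<forall>j\<in>T. i \<noteq> j \<longrightarrow> A i \<inter> A j = {})"

definition val :: "('t \<Rightarrow> 'p \<Rightarrow> real) \<Rightarrow> 't \<Rightarrow> 'p set \<Rightarrow> real" where
  "val v i S = (\<Sum>p\<in>S. v i p)"

definition weak_pref :: "'t set \<Rightarrow> ('t \<Rightarrow> 't \<Rightarrow> bool) \<Rightarrow> bool" where
  "weak_pref T R \<longleftrightarrow> (\<forall>s\<in>T. \<forall>t\<in>T. R s t \<or> R t s)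
      \<and> (\<forall>r\<in>T. \<forall>s\<in>T. \<forall>t\<in>T. R r s \<longrightarrow> R s t \<longrightarrow> R r t)"

definition EF1 :: "'t set \<Rightarrow> ('t \<Rightarrow> 'p \<Rightarrow> real) \<Rightarrow> ('t \<Rightarrow> 'p set) \<Rightarrow> bool" where
  "EF1 T v A \<longleftrightarrow> (\<forall>i\<in>T. \<forall>j\<in>T. i \<noteq> j \<longrightarrow>
     (\<exists>X Y. X \<subseteq> A i \<and> Y \<subseteq> A j \<and> card (X \<union> Y) \<le> 1 \<and>
            val v i (A i - X) \<ge> val v i (A j - Y)))"

definition team_of :: "'t set \<Rightarrow> ('t \<Rightarrow> 'p set) \<Rightarrow> 'p \<Rightarrow> 't" where
  "team_of T A p = (THE i. i \<in> T \<and> p \<in> A i)"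

definition pareto_dominates ::
  "'t set \<Rightarrow> 'p set \<Rightarrow> ('p \<Rightarrow> 't \<Rightarrow> 't \<Rightarrow> bool) \<Rightarrow> ('t \<Rightarrow> 'p \<Rightarrow> real)
     \<Rightarrow> ('t \<Rightarrow> 'p set) \<Rightarrow> ('t \<Rightarrow> 'p set) \<Rightarrow> bool" where
  "pareto_dominates T P pref v A' A \<longleftrightarrow>
     (\<forall>i\<in>T. val v i (A' i) \<ge> val v i (A i)) \<and>
     (\<forall>p\<in>P. pref p (team_of T A' p) (team_of T A p)) \<and>
     ((\<exists>i\<in>T. val v i (A' i) > val v i (A i)) \<or>
      (\<exists>p\<in>P. \<not> pref p (team_of T A p) (team_of T A' p)))"

definition pareto_optimal ::
  "'t set \<Rightarrow> 'p set \<Rightarrow> ('p \<Rightarrow> 't \<Rightarrow> 't \<Rightarrow> bool) \<Rightarrow> ('t \<Rightarrow> 'p \<Rightarrow> real)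
     \<Rightarrow> ('t \<Rightarrow> 'p set) \<Rightarrow> bool" where
  "pareto_optimal T P pref v A \<longleftrightarrow>
     allocation T P A \<and>
     \<not> (\<exists>A'. allocation T P A' \<and> pareto_dominates T P pref v A' A)"

end

theory Submission
  imports Defs "HOL-Library.FuncSet" "HOL-Library.Product_Lexorder"
begin

text \<open>Take an allocation maximizing lexicographically the number of teams of positive value,
  the product of these positive values (maximum Nash welfare), and the total rank that the players
  give to their own teams. A Pareto improvement weakly raises every team's value, so it would
  either enlarge the set of positive teams, raise the Nash product, or leave all team values
  unchanged while making some player strictly and no player less happy, raising the rank sum.
  If team i envied team j even after removing any single player of j, moving a suitable player g
  from j to i would raise the first two criteria: if i has value 0, take a g that i values
  positively and without whom j keeps a positive value; otherwise take g minimizing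
  v j g / v i g, for which the strong envy gives (a + v i g) (b - v j g) > a b.\<close>

lemma prod_less_prod_if_less_on_subset:
  fixes h h' :: "'a \<Rightarrow> real"
  assumes "finite S" and "B \<subseteq> S" and "\<forall>k\<in>S. 0 < h k" and "\<forall>k\<in>S - B. h k = h' k"
    and "prod h B < prod h' B"
  shows "prod h S < prod h' S"
proof -
  have "prod h (S - B) = prod h' (S - B)" using assms(4) by (intro prod.cong) auto
  moreover have "0 < prod h (S - B)" using assms(3) by (intro prod_pos) auto
  ultimately show ?thesis
    using assms(5) by (simp add: prod.subset_diff[OF assms(2,1)])
qed

text \<open>In the next two lemmas A is the envied team's set of players, and x and y are the values
  of the envious and the envied team.\<close>

lemma ex_item_keeping_rest_positive:
  fixes x y :: "'a \<Rightarrow> real"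
  assumes "finite A" and "\<forall>g\<in>A. 0 \<le> x g" and "\<forall>g\<in>A. 0 \<le> y g"
    and "0 < sum x A" and "\<forall>g\<in>A. x g < sum x A"
  shows "\<exists>g\<in>A. 0 < x g \<and> (sum y A = 0 \<or> y g < sum y A)"
proof -
  obtain g1 where g1: "g1 \<in> A" "0 < x g1"
    using assms(4) by (meson linorder_not_le sum_nonpos)
  show ?thesis
  proof (cases "sum y A = 0 \<or> y g1 < sum y A")
    case True
    then show ?thesis using g1 by blast
  next
    case False
    have "0 < sum x (A - {g1})"
      using assms(1,5) g1 by (simp add: sum_diff1)
    then obtain g2 where g2: "g2 \<in> A - {g1}" "0 < x g2"
      by (meson linorder_not_le sum_nonpos)
    have "y g1 + y g2 = sum y {g1, g2}" using g2 by auto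
    also have "\<dots> \<le> sum y A"
      using assms(1,3) g1 g2 by (intro sum_mono2) auto
    finally have "y g2 < sum y A"
      using False assms(3) g1 sum_nonneg[of A y] by force
    then show ?thesis using g2 by blast
  qed
qed

lemma ex_item_raising_product:
  fixes x y :: "'a \<Rightarrow> real"
  assumes "finite A" and "\<forall>g\<in>A. 0 \<le> x g" and "\<forall>g\<in>A. 0 \<le> y g"
    and "0 < a" and "0 < sum y A" and "a < sum x A" and "\<forall>g\<in>A. a + x g < sum x A"
  shows "\<exists>g\<in>A. 0 < x g \<and> a * sum y A < (a + x g) * (sum y A - y g)"
proof -
  define G where "G = {g\<in>A. 0 < x g}"
  have "G \<subseteq> A" and "finite G" using assms(1) unfolding G_def by auto
  have sum_x_G: "sum x A = sum x G"
    using assms(1,2) unfolding G_def by (intro sum.mono_neutral_right) force+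
  then have "G \<noteq> {}" using assms(4,6) by auto
  then obtain g where "g \<in> G" and g_min: "\<forall>h\<in>G. y g / x g \<le> y h / x h"
    using ex_is_arg_min_if_finite[OF \<open>finite G\<close>, of "\<lambda>h. y h / x h"]
    by (auto simp: is_arg_min_linorder)
  have "x g > 0" "g \<in> A" using \<open>g \<in> G\<close> unfolding G_def by auto
  \<comment> \<open>minimality of the ratio gives y g / x g \<le> sum y G / sum x G\<close>
  have "y g * sum x A = (\<Sum>h\<in>G. y g * x h)" by (simp add: sum_x_G sum_distrib_left)
  also have "\<dots> \<le> (\<Sum>h\<in>G. x g * y h)"
  proof (intro sum_mono)
    fix h assume "h \<in> G"
    then have "0 < x h" "y g / x g \<le> y h / x h" using g_min unfolding G_def by auto
    then show "y g * x h \<le> x g * y h" using \<open>x g > 0\<close> by (simp add: field_simps)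
  qed
  also have "\<dots> \<le> x g * sum y A"
    unfolding sum_distrib_left[symmetric] using \<open>G \<subseteq> A\<close> assms(1,3) \<open>x g > 0\<close>
    by (intro mult_left_mono sum_mono2) auto
  finally have "y g * sum x A \<le> x g * sum y A" .
  moreover have "0 \<le> y g" and "a + x g < sum x A" using assms(3,7) \<open>g \<in> A\<close> by auto
  ultimately have "y g * (a + x g) < x g * sum y A"
    using assms(5) \<open>x g > 0\<close>
    by (cases "y g = 0") (simp, smt (verit) mult_strict_left_mono)
  then show ?thesis using \<open>g \<in> A\<close> \<open>x g > 0\<close> by (intro bexI[of _ g]) (simp_all add: algebra_simps)
qed

locale team_instance =
  fixes T :: "'t set" and P :: "'p set"
    and pref :: "'p \<Rightarrow> 't \<Rightarrow> 't \<Rightarrow> bool" and v :: "'t \<Rightarrow> 'p \<Rightarrow> real"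
  assumes finite_teams: "finite T" and finite_players: "finite P"
    and weak_prefs: "\<And>p. p \<in> P \<Longrightarrow> weak_pref T (pref p)"
    and values_nonneg: "\<And>i p. i \<in> T \<Longrightarrow> p \<in> P \<Longrightarrow> 0 \<le> v i p"
begin

definition assignments :: "('p \<Rightarrow> 't) set" where
  "assignments = P \<rightarrow>\<^sub>E T"

definition members :: "('p \<Rightarrow> 't) \<Rightarrow> 't \<Rightarrow> 'p set" where
  "members f i = {p \<in> P. f p = i}"

definition util :: "('p \<Rightarrow> 't) \<Rightarrow> 't \<Rightarrow> real" where
  "util f i = val v i (members f i)"

definition positive_teams :: "('p \<Rightarrow> 't) \<Rightarrow> 't set" where
  "positive_teams f = {i \<in> T. 0 < util f i}"

definition nash_welfare :: "('p \<Rightarrow> 't) \<Rightarrow> real" where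
  "nash_welfare f = (\<Prod>i\<in>positive_teams f. util f i)"

definition pref_rank :: "'p \<Rightarrow> 't \<Rightarrow> nat" where
  "pref_rank p t = card {s \<in> T. pref p t s}"

definition rank_sum :: "('p \<Rightarrow> 't) \<Rightarrow> nat" where
  "rank_sum f = (\<Sum>p\<in>P. pref_rank p (f p))"

text \<open>Keys are compared lexicographically (\<open>Product_Lexorder\<close>).\<close>

definition nash_key :: "('p \<Rightarrow> 't) \<Rightarrow> nat \<times> real" where
  "nash_key f = (card (positive_teams f), nash_welfare f)"

definition welfare_key :: "('p \<Rightarrow> 't) \<Rightarrow> (nat \<times> real) \<times> nat" where
  "welfare_key f = (nash_key f, rank_sum f)"

lemma finite_members: "finite (members f i)"
  using finite_players unfolding members_def by simp

lemma util_nonneg: "i \<in> T \<Longrightarrow> 0 \<le> util f i"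
  unfolding util_def val_def members_def by (auto intro: sum_nonneg values_nonneg)

lemma allocation_members: "f \<in> assignments \<Longrightarrow> allocation T P (members f)"
  unfolding assignments_def allocation_def members_def by (auto simp: PiE_iff)

lemma team_of_members: "f \<in> assignments \<Longrightarrow> p \<in> P \<Longrightarrow> team_of T (members f) p = f p"
  unfolding team_of_def assignments_def members_def by (rule the_equality) auto

lemma team_of_allocation:
  assumes "allocation T P A" and "i \<in> T" and "p \<in> A i"
  shows "team_of T A p = i"
  unfolding team_of_def using assms unfolding allocation_def by (intro the_equality) blast+

lemma allocation_eq_members:
  assumes "allocation T P A"
  obtains f where "f \<in> assignments" and "\<And>i. i \<in> T \<Longrightarrow> members f i = A i"
    and "\<And>p. p \<in> P \<Longrightarrow> team_of T A p = f p"
proof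
  let ?f = "restrict (team_of T A) P"
  have team: "\<exists>i\<in>T. p \<in> A i \<and> team_of T A p = i" if "p \<in> P" for p
    using assms that team_of_allocation[OF assms] unfolding allocation_def by blast
  show "?f \<in> assignments"
    unfolding assignments_def restrict_PiE_iff using team by blast
  show "members ?f i = A i" if "i \<in> T" for i
  proof (intro set_eqI iffI)
    fix p assume "p \<in> members ?f i"
    then show "p \<in> A i" using team unfolding members_def by auto
  next
    fix p assume "p \<in> A i"
    moreover have "p \<in> P" using assms that \<open>p \<in> A i\<close> unfolding allocation_def by blast
    ultimately show "p \<in> members ?f i"
      using team_of_allocation[OF assms that] unfolding members_def by simp
  qed
  show "team_of T A p = ?f p" if "p \<in> P" for p
    using that by simp
qed

lemma move_in_assignments: "f \<in> assignments \<Longrightarrow> g \<in> P \<Longrightarrow> i \<in> T \<Longrightarrow> f(g := i) \<in> assignments"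
  unfolding assignments_def by (auto simp: PiE_iff extensional_def)

lemma util_move:
  assumes "g \<in> members f j" and "i \<noteq> j"
  shows "util (f(g := i)) i = util f i + v i g"
    and "util (f(g := i)) j = util f j - v j g"
    and "k \<noteq> i \<Longrightarrow> k \<noteq> j \<Longrightarrow> util (f(g := i)) k = util f k"
proof -
  have "members (f(g := i)) i = insert g (members f i)" and "g \<notin> members f i"
    and "members (f(g := i)) j = members f j - {g}"
    and "k \<noteq> i \<Longrightarrow> k \<noteq> j \<Longrightarrow> members (f(g := i)) k = members f k"
    using assms unfolding members_def by auto
  with assms(1) finite_members show "util (f(g := i)) i = util f i + v i g"
    and "util (f(g := i)) j = util f j - v j g"
    and "k \<noteq> i \<Longrightarrow> k \<noteq> j \<Longrightarrow> util (f(g := i)) k = util f k"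
    unfolding util_def val_def by (simp_all add: sum_diff1)
qed

lemma nash_key_less_if_positive_teams_psubset:
  "positive_teams f \<subset> positive_teams f' \<Longrightarrow> nash_key f < nash_key f'"
  unfolding nash_key_def positive_teams_def
  using finite_teams by (simp add: psubset_card_mono)

lemma nash_key_less_if_util_dominates:
  assumes "\<forall>k\<in>T. util f k \<le> util f' k" and "i \<in> T" and "util f i < util f' i"
  shows "nash_key f < nash_key f'"
proof (cases "positive_teams f' = positive_teams f")
  case True
  have "i \<in> positive_teams f"
    using assms util_nonneg[of i f] True unfolding positive_teams_def by force
  then have "nash_welfare f < nash_welfare f'"
    unfolding nash_welfare_def True using assms finite_teams
    by (intro prod_mono_strict) (auto simp: positive_teams_def)
  then show ?thesis by (simp add: nash_key_def True)
next
  case False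
  have "positive_teams f \<subseteq> positive_teams f'"
    using assms(1) unfolding positive_teams_def by force
  with False show ?thesis by (intro nash_key_less_if_positive_teams_psubset) blast
qed

lemma nash_key_less_if_move_to_zero_util:
  assumes g: "g \<in> members f j" and "i \<in> T" and "i \<noteq> j" and "util f i = 0" and "0 < v i g"
    and keep: "util f j = 0 \<or> v j g < util f j"
  shows "nash_key f < nash_key (f(g := i))"
proof (rule nash_key_less_if_positive_teams_psubset)
  note moved = util_move[OF g \<open>i \<noteq> j\<close>]
  have "positive_teams f \<subseteq> positive_teams (f(g := i))"
  proof
    fix k assume k: "k \<in> positive_teams f"
    then have "k \<noteq> i" using assms(4) unfolding positive_teams_def by auto
    with k show "k \<in> positive_teams (f(g := i))"
      using keep moved(2,3) unfolding positive_teams_def by (cases "k = j") auto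
  qed
  moreover have "i \<in> positive_teams (f(g := i)) - positive_teams f"
    using assms moved unfolding positive_teams_def by simp
  ultimately show "positive_teams f \<subset> positive_teams (f(g := i))" by blast
qed

lemma nash_key_less_if_move_to_positive_util:
  assumes g: "g \<in> members f j" and "i \<in> T" and "j \<in> T" and "i \<noteq> j"
    and "0 < util f i" and "0 < v i g"
    and gain: "util f j = 0 \<or> util f i * util f j < (util f i + v i g) * (util f j - v j g)"
  shows "nash_key f < nash_key (f(g := i))"
proof -
  let ?f' = "f(g := i)"
  note moved = util_move[OF g \<open>i \<noteq> j\<close>]
  have "0 \<le> v j g" using g \<open>j \<in> T\<close> values_nonneg unfolding members_def by simp
  have j_positive: "0 < util ?f' j \<longleftrightarrow> 0 < util f j"
  proof (cases "util f j = 0")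
    case False
    then have "0 < util f j" using util_nonneg[of j f, OF \<open>j \<in> T\<close>] by simp
    with gain False \<open>0 < util f i\<close> \<open>0 < v i g\<close> have "0 < util f j - v j g"
      by (smt (verit) mult_pos_pos zero_less_mult_iff)
    with \<open>0 < util f j\<close> show ?thesis using moved(2) by simp
  qed (use moved(2) \<open>0 \<le> v j g\<close> in simp)
  have same_teams: "positive_teams ?f' = positive_teams f"
  proof (intro set_eqI)
    fix k
    show "k \<in> positive_teams ?f' \<longleftrightarrow> k \<in> positive_teams f"
      using moved j_positive \<open>0 < util f i\<close> \<open>0 < v i g\<close> unfolding positive_teams_def
      by (cases "k = i"; cases "k = j") auto
  qed
  have "nash_welfare f < nash_welfare ?f'"
    unfolding nash_welfare_def same_teams
  proof (rule prod_less_prod_if_less_on_subset)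
    let ?B = "positive_teams f \<inter> {i, j}"
    show "finite (positive_teams f)" using finite_teams unfolding positive_teams_def by simp
    show "\<forall>k\<in>positive_teams f. 0 < util f k" unfolding positive_teams_def by simp
    show "\<forall>k\<in>positive_teams f - ?B. util f k = util ?f' k" using moved(3) by simp
    have "i \<in> positive_teams f" using \<open>i \<in> T\<close> \<open>0 < util f i\<close> unfolding positive_teams_def by simp
    show "prod (util f) ?B < prod (util ?f') ?B"
    proof (cases "util f j = 0")
      case True
      then have "?B = {i}" using \<open>i \<in> positive_teams f\<close> unfolding positive_teams_def by auto
      then show ?thesis using moved(1) \<open>0 < v i g\<close> by simp
    next
      case False
      then have "?B = {i, j}"
        using \<open>i \<in> positive_teams f\<close> \<open>j \<in> T\<close> util_nonneg[of j f, OF \<open>j \<in> T\<close>]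
        unfolding positive_teams_def by auto
      then show ?thesis using gain False moved(1,2) \<open>i \<noteq> j\<close> by simp
    qed
  qed simp
  then show ?thesis by (simp add: nash_key_def same_teams)
qed

lemma improving_move_of_strong_envy:
  assumes "i \<in> T" and "j \<in> T" and "i \<noteq> j"
    and envy: "util f i < val v i (members f j)"
    and strong_envy: "\<forall>g\<in>members f j. util f i + v i g < val v i (members f j)"
  shows "\<exists>g\<in>members f j. nash_key f < nash_key (f(g := i))"
proof -
  let ?A = "members f j"
  have nonneg: "\<forall>g\<in>?A. 0 \<le> v i g" "\<forall>g\<in>?A. 0 \<le> v j g"
    using assms(1,2) values_nonneg unfolding members_def by auto
  have util_j: "util f j = sum (v j) ?A" and val_i: "val v i ?A = sum (v i) ?A"
    unfolding util_def val_def by simp_all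
  have "0 \<le> util f i" and "0 \<le> util f j" using assms(1,2) util_nonneg by auto
  then consider (envious_zero) "util f i = 0" | (envied_zero) "0 < util f i" "util f j = 0"
    | (both_positive) "0 < util f i" "0 < util f j"
    by fastforce
  then show ?thesis
  proof cases
    case envious_zero
    then obtain g where "g \<in> ?A" "0 < v i g" "util f j = 0 \<or> v j g < util f j"
      using ex_item_keeping_rest_positive[OF finite_members nonneg] envy strong_envy
      unfolding util_j val_i by auto
    then show ?thesis using nash_key_less_if_move_to_zero_util assms(1,3) envious_zero by blast
  next
    case envied_zero
    then obtain g where "g \<in> ?A" "0 < v i g"
      using envy unfolding val_i by (meson less_trans linorder_not_le sum_nonpos)
    then show ?thesis using nash_key_less_if_move_to_positive_util assms(1-3) envied_zero by blast
  next
    case both_positive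
    then obtain g where "g \<in> ?A" "0 < v i g"
      "util f i * util f j < (util f i + v i g) * (util f j - v j g)"
      using ex_item_raising_product[OF finite_members nonneg] envy strong_envy
      unfolding util_j val_i by auto
    then show ?thesis using nash_key_less_if_move_to_positive_util assms(1-3) both_positive by blast
  qed
qed

lemma EF1_if_nash_key_maximal:
  assumes "f \<in> assignments" and maximal: "\<forall>f'\<in>assignments. \<not> nash_key f < nash_key f'"
  shows "EF1 T v (members f)"
  unfolding EF1_def
proof (intro ballI impI)
  fix i j assume "i \<in> T" and "j \<in> T" and "i \<noteq> j"
  show "\<exists>X Y. X \<subseteq> members f i \<and> Y \<subseteq> members f j \<and> card (X \<union> Y) \<le> 1 \<and>
      val v i (members f i - X) \<ge> val v i (members f j - Y)" (is "\<exists>X Y. ?EF1 X Y")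
  proof (rule ccontr)
    assume no_witness: "\<not> (\<exists>X Y. ?EF1 X Y)"
    then have "\<not> ?EF1 {} {}" by blast
    then have envy: "util f i < val v i (members f j)" by (simp add: util_def)
    have "util f i + v i g < val v i (members f j)" if "g \<in> members f j" for g
    proof -
      have "\<not> ?EF1 {} {g}" using no_witness by blast
      then show ?thesis using that finite_members by (simp add: util_def val_def sum_diff1)
    qed
    then obtain g where "g \<in> members f j" and "nash_key f < nash_key (f(g := i))"
      using improving_move_of_strong_envy \<open>i \<in> T\<close> \<open>j \<in> T\<close> \<open>i \<noteq> j\<close> envy by blast
    moreover have "f(g := i) \<in> assignments"
      using \<open>g \<in> members f j\<close> \<open>i \<in> T\<close> assms(1) move_in_assignments unfolding members_def by simp
    ultimately show False using maximal by blast
  qed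
qed

lemma pref_rank_mono:
  assumes "p \<in> P" and "s \<in> T" and "t \<in> T" and "pref p t s"
  shows "pref_rank p s \<le> pref_rank p t" and "\<not> pref p s t \<Longrightarrow> pref_rank p s < pref_rank p t"
proof -
  have total: "\<forall>r\<in>T. \<forall>q\<in>T. pref p r q \<or> pref p q r"
    and trans: "\<forall>r\<in>T. \<forall>q\<in>T. \<forall>u\<in>T. pref p r q \<longrightarrow> pref p q u \<longrightarrow> pref p r u"
    using weak_prefs[OF assms(1)] unfolding weak_pref_def by blast+
  have sub: "{r \<in> T. pref p s r} \<subseteq> {r \<in> T. pref p t r}"
    using trans assms(2-4) by blast
  then show "pref_rank p s \<le> pref_rank p t"
    unfolding pref_rank_def using finite_teams by (intro card_mono) auto
  assume "\<not> pref p s t"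
  moreover have "pref p t t" using total assms(3) by blast
  ultimately have "{r \<in> T. pref p s r} \<subset> {r \<in> T. pref p t r}" using sub assms(3) by blast
  then show "pref_rank p s < pref_rank p t"
    unfolding pref_rank_def using finite_teams by (intro psubset_card_mono) auto
qed

lemma rank_sum_less:
  assumes "f \<in> assignments" and "f' \<in> assignments" and "\<forall>p\<in>P. pref p (f' p) (f p)"
    and "q \<in> P" and "\<not> pref q (f q) (f' q)"
  shows "rank_sum f < rank_sum f'"
proof -
  have teams: "f p \<in> T" "f' p \<in> T" if "p \<in> P" for p
    using assms(1,2) that unfolding assignments_def by auto
  show ?thesis
    unfolding rank_sum_def
  proof (rule sum_strict_mono_ex1[OF finite_players])
    show "\<forall>p\<in>P. pref_rank p (f p) \<le> pref_rank p (f' p)"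
      using teams assms(3) pref_rank_mono(1) by blast
    show "\<exists>p\<in>P. pref_rank p (f p) < pref_rank p (f' p)"
      using teams assms(3-5) pref_rank_mono(2) by blast
  qed
qed

lemma pareto_optimal_if_welfare_key_maximal:
  assumes "f \<in> assignments" and maximal: "\<forall>f'\<in>assignments. \<not> welfare_key f < welfare_key f'"
  shows "pareto_optimal T P pref v (members f)"
  unfolding pareto_optimal_def
proof (intro conjI notI allocation_members[OF assms(1)])
  assume "\<exists>A'. allocation T P A' \<and> pareto_dominates T P pref v A' (members f)"
  then obtain A' where A': "allocation T P A'" and dominates: "pareto_dominates T P pref v A' (members f)"
    by blast
  obtain f' where "f' \<in> assignments" and members_f': "\<And>i. i \<in> T \<Longrightarrow> members f' i = A' i"
    and team_f': "\<And>p. p \<in> P \<Longrightarrow> team_of T A' p = f' p"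
    using allocation_eq_members[OF A'] by blast
  have team_f: "team_of T (members f) p = f p" if "p \<in> P" for p
    using team_of_members[OF assms(1) that] .
  have utils: "\<forall>k\<in>T. util f k \<le> util f' k"
    and prefs: "\<forall>p\<in>P. pref p (f' p) (f p)"
    and strict: "(\<exists>k\<in>T. util f k < util f' k) \<or> (\<exists>p\<in>P. \<not> pref p (f p) (f' p))"
    using dominates unfolding pareto_dominates_def util_def by (simp_all add: members_f' team_f team_f')
  have "welfare_key f < welfare_key f'"
  proof (cases "\<exists>k\<in>T. util f k < util f' k")
    case True
    then show ?thesis
      using nash_key_less_if_util_dominates[OF utils] by (auto simp: welfare_key_def)
  next
    case False
    with utils have same_utils: "\<forall>k\<in>T. util f' k = util f k" by force
    then have same_teams: "positive_teams f' = positive_teams f"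
      unfolding positive_teams_def by auto
    have "nash_welfare f' = nash_welfare f"
      unfolding nash_welfare_def same_teams using same_utils
      by (intro prod.cong) (auto simp: positive_teams_def)
    with same_teams have "nash_key f' = nash_key f" by (simp add: nash_key_def)
    moreover have "rank_sum f < rank_sum f'"
      using False strict rank_sum_less[OF assms(1) \<open>f' \<in> assignments\<close> prefs] by blast
    ultimately show ?thesis by (simp add: welfare_key_def)
  qed
  with maximal \<open>f' \<in> assignments\<close> show False by blast
qed

lemma welfare_key_maximal_exists:
  assumes "T \<noteq> {}"
  obtains f where "f \<in> assignments" and "\<forall>f'\<in>assignments. \<not> welfare_key f < welfare_key f'"
proof -
  let ?keys = "welfare_key ` assignments"
  have "finite assignments"
    unfolding assignments_def using finite_players finite_teams by (intro finite_PiE)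
  then have "finite ?keys" by simp
  have "assignments \<noteq> {}"
    unfolding assignments_def using assms by (simp add: PiE_eq_empty_iff)
  then have "Max ?keys \<in> ?keys" using \<open>finite ?keys\<close> by (intro Max_in) auto
  then obtain f where "f \<in> assignments" and key_f: "Max ?keys = welfare_key f" by (rule imageE)
  moreover have "\<not> welfare_key f < welfare_key f'" if "f' \<in> assignments" for f'
    unfolding key_f[symmetric] using \<open>finite ?keys\<close> that by (intro leD Max_ge) auto
  ultimately show ?thesis using that by blast
qed

end

theorem theorem5:
  fixes T :: "'t set" and P :: "'p set"
    and pref :: "'p \<Rightarrow> 't \<Rightarrow> 't \<Rightarrow> bool"
    and v :: "'t \<Rightarrow> 'p \<Rightarrow> real"
  assumes "finite T" and "T \<noteq> {}" and "finite P"
    and "\<And>p. p \<in> P \<Longrightarrow> weak_pref T (pref p)"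
    and "\<And>i p. i \<in> T \<Longrightarrow> p \<in> P \<Longrightarrow> v i p \<ge> 0"
  shows "\<exists>A. allocation T P A \<and> EF1 T v A \<and> pareto_optimal T P pref v A"
proof -
  interpret team_instance T P pref v
    using assms(1,3-5) by unfold_locales
  obtain f where f: "f \<in> assignments"
    and maximal: "\<forall>f'\<in>assignments. \<not> welfare_key f < welfare_key f'"
    using welfare_key_maximal_exists[OF assms(2)] .
  have "\<forall>f'\<in>assignments. \<not> nash_key f < nash_key f'"
    using maximal unfolding welfare_key_def by simp
  then show ?thesis
    using allocation_members[OF f] EF1_if_nash_key_maximal[OF f]
      pareto_optimal_if_welfare_key_maximal[OF f maximal] by blast
qed

end
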